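(* Let $d>0$, $u>0$, $K_z>0$, $K_x>0$, $k>0$, $\sigma>0$, $l>0$, $\rho\ge 0$, and let $S:\mathbb{R}\to\mathbb{R}$ be a smooth odd saturating function with $S(0)=0$ and $S'(0)=1$. Let $\eta(z)=\exp(-z^2/(2\sigma^2))$ and consider, with bias $b=0$, the planar system $$\dot z = -d\,z + u\,S(z) + b - K_z\,\eta(z)\,(z-x),\qquad \dot x = (1-\eta(z))\,K_x\!\left(\tfrac{\rho}{l}\tanh(kz) - x\right) - \eta(z)\,(x-z).$$ Set $u^*=d$. Then the equilibrium $(z,x)=(0,0)$ is locally exponentially stable for $0<u<u^*$ and unstable for $u>u^*$.
   Context: This system models an agent choosing between two spatially separated tasks: $z$ is its opinion (preference, $z>0$ favoring task 1, $z<0$ task 2), $x$ its horizontal position, $d$ a damping coefficient, $u$ an attention gain, $b$ a bias, $K_z$ a coupling weight, $K_x$ a velocity gain. *)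

theory Defs
  imports "HOL-Analysis.Analysis"
begin

definition smooth_fun :: "(real \<Rightarrow> real) \<Rightarrow> bool" where
  "smooth_fun S \<longleftrightarrow> (\<forall>n x. ((deriv ^^ n) S) differentiable (at x))"

definition odd_fun :: "(real \<Rightarrow> real) \<Rightarrow> bool" where
  "odd_fun S \<longleftrightarrow> (\<forall>x. S (- x) = - S x)"

definition saturating :: "(real \<Rightarrow> real) \<Rightarrow> bool" where
  "saturating S \<longleftrightarrow> bounded (range S) \<and> mono S"

definition eta :: "real \<Rightarrow> real \<Rightarrow> real" where
  "eta \<sigma> z = exp (- (z\<^sup>2) / (2 * \<sigma>\<^sup>2))"

definition task_field ::
  "real \<Rightarrow> real \<Rightarrow> real \<Rightarrow> real \<Rightarrow> real \<Rightarrow> real \<Rightarrow> real \<Rightarrow> real \<Rightarrow> real \<Rightarrow> (real \<Rightarrow> real)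
   \<Rightarrow> real \<times> real \<Rightarrow> real \<times> real" where
  "task_field d u b Kz Kx k \<sigma> l \<rho> S p =
     (let z = fst p; x = snd p in
       (- d * z + u * S z + b - Kz * eta \<sigma> z * (z - x),
        (1 - eta \<sigma> z) * Kx * (\<rho> / l * tanh (k * z) - x) - eta \<sigma> z * (x - z)))"

definition is_solution :: "(real \<times> real \<Rightarrow> real \<times> real) \<Rightarrow> (real \<Rightarrow> real \<times> real) \<Rightarrow> real \<Rightarrow> bool" where
  "is_solution F f T \<longleftrightarrow>
     (\<forall>t\<in>{0..T}. (f has_vector_derivative F (f t)) (at t within {0..T}))"

definition loc_exp_stable_origin :: "(real \<times> real \<Rightarrow> real \<times> real) \<Rightarrow> bool" where
  "loc_exp_stable_origin F \<longleftrightarrow> F (0,0) = (0,0) \<and>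
     (\<exists>\<delta>>0. \<exists>M>0. \<exists>c>0. \<forall>f T. T \<ge> 0 \<longrightarrow> is_solution F f T \<longrightarrow> norm (f 0) < \<delta> \<longrightarrow>
        (\<forall>t\<in>{0..T}. norm (f t) \<le> M * exp (- c * t) * norm (f 0)))"

definition lyap_stable_origin :: "(real \<times> real \<Rightarrow> real \<times> real) \<Rightarrow> bool" where
  "lyap_stable_origin F \<longleftrightarrow>
     (\<forall>\<epsilon>>0. \<exists>\<delta>>0. \<forall>f T. T \<ge> 0 \<longrightarrow> is_solution F f T \<longrightarrow> norm (f 0) < \<delta> \<longrightarrow>
        (\<forall>t\<in>{0..T}. norm (f t) < \<epsilon>))"

definition unstable_origin :: "(real \<times> real \<Rightarrow> real \<times> real) \<Rightarrow> bool" where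
  "unstable_origin F \<longleftrightarrow> F (0,0) = (0,0) \<and> \<not> lyap_stable_origin F"

end

theory Submission
  imports Defs
begin

(* Linearizing at the origin (S 0 = 0, S'(0) = 1, eta = 1 - O(z^2)) gives the matrix
   A = [[u - d - Kz, Kz], [1, -1]].  Along A the combination w = z + Kz x satisfies w' = (u - d) z,
   so V(z, x) = (z + Kz x)^2 - (u - d) Kz x^2 has derivative 2 (u - d) (z^2 + Kz x^2) along A.
   The nonlinear remainder is o(|p|), so near the origin the derivative of V along the field is
   at most -c V if u < d and at least c V if u > d.  In the first case V is positive definite and
   decays exponentially, which gives local exponential stability.  In the second case V is positive
   at points (s, 0) arbitrarily close to the origin and grows exponentially as long as the solution
   stays close, so that solution must leave a fixed ball.  Such solutions exist because the field is
   locally Lipschitz; existence is proved by Picard iteration in an exponentially weighted sup norm. *)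

section \<open>Lipschitz functions\<close>

lemma ex_lipschitz_on_interval_C1:
  fixes h :: "real \<Rightarrow> real"
  assumes "\<And>y. (h has_real_derivative h' y) (at y)" and "continuous_on {a..b} h'"
  shows "\<exists>L. L-lipschitz_on {a..b} h"
proof -
  have "bounded (h' ` {a..b})"
    using compact_continuous_image[OF assms(2) compact_Icc] by (rule compact_imp_bounded)
  then obtain B where B: "B > 0" "\<And>y. y \<in> {a..b} \<Longrightarrow> \<bar>h' y\<bar> \<le> B"
    unfolding bounded_pos by auto
  have "B-lipschitz_on {a..b} h"
  proof (rule bounded_derivative_imp_lipschitz)
    fix y assume y: "y \<in> {a..b}"
    show "(h has_derivative (*) (h' y)) (at y within {a..b})"
      using assms(1)[of y] by (simp add: has_field_derivative_def has_derivative_at_withinI)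
    show "onorm ((*) (h' y)) \<le> B"
    proof (rule onorm_le)
      fix t
      show "norm (h' y * t) \<le> B * norm t"
        using B(2)[OF y] by (simp add: abs_mult mult_right_mono)
    qed
  qed (use B in auto)
  then show ?thesis by blast
qed

lemma ex_lipschitz_on_mult_compact:
  fixes f g :: "'a::metric_space \<Rightarrow> real"
  assumes "compact X" and "\<exists>L. L-lipschitz_on X f" and "\<exists>M. M-lipschitz_on X g"
  shows "\<exists>K. K-lipschitz_on X (\<lambda>x. f x * g x)"
proof -
  obtain L M where f: "L-lipschitz_on X f" and g: "M-lipschitz_on X g"
    using assms(2,3) by blast
  have "bounded (f ` X)" "bounded (g ` X)"
    using assms(1) lipschitz_on_continuous_on[OF f] lipschitz_on_continuous_on[OF g]
    by (simp_all add: compact_imp_bounded compact_continuous_image)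
  then obtain A B where A: "A > 0" "\<And>x. x \<in> X \<Longrightarrow> \<bar>f x\<bar> \<le> A"
    and B: "B > 0" "\<And>x. x \<in> X \<Longrightarrow> \<bar>g x\<bar> \<le> B"
    unfolding bounded_pos by auto
  have "(A * M + B * L)-lipschitz_on X (\<lambda>x. f x * g x)"
  proof (rule lipschitz_onI)
    fix x y assume xy: "x \<in> X" "y \<in> X"
    have "\<bar>f x * g x - f y * g y\<bar> = \<bar>f x * (g x - g y) + g y * (f x - f y)\<bar>"
      by (simp add: algebra_simps)
    also have "\<dots> \<le> \<bar>f x\<bar> * \<bar>g x - g y\<bar> + \<bar>g y\<bar> * \<bar>f x - f y\<bar>"
      by (rule order_trans[OF abs_triangle_ineq]) (simp add: abs_mult)
    also have "\<dots> \<le> A * (M * dist x y) + B * (L * dist x y)"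
      using xy A B lipschitz_onD[OF f xy] lipschitz_onD[OF g xy]
      by (intro add_mono mult_mono) (simp_all add: dist_real_def)
    finally show "dist (f x * g x) (f y * g y) \<le> (A * M + B * L) * dist x y"
      by (simp add: dist_real_def algebra_simps)
  next
    show "0 \<le> A * M + B * L"
      using A B lipschitz_on_nonneg[OF f] lipschitz_on_nonneg[OF g] by simp
  qed
  then show ?thesis by blast
qed

lemma ex_lipschitz_on_compose_C1:
  fixes f :: "'a::metric_space \<Rightarrow> real"
  assumes "compact X" and f: "L-lipschitz_on X f"
    and "\<And>y. (h has_real_derivative h' y) (at y)" and "continuous_on UNIV h'"
  shows "\<exists>K. K-lipschitz_on X (\<lambda>x. h (f x))"
proof -
  have "bounded (f ` X)"
    using assms(1) lipschitz_on_continuous_on[OF f] by (simp add: compact_imp_bounded compact_continuous_image)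
  then obtain a where "f ` X \<subseteq> cbox (-a) a"
    using bounded_subset_cbox_symmetric by blast
  then have a: "f ` X \<subseteq> {-a..a}"
    by (simp add: cbox_interval)
  obtain M where "M-lipschitz_on {-a..a} h"
    using ex_lipschitz_on_interval_C1[OF assms(3)] continuous_on_subset[OF assms(4)] by blast
  then have "(M * L)-lipschitz_on X (\<lambda>x. h (f x))"
    by (rule lipschitz_on_compose2[OF f lipschitz_on_subset[OF _ a]])
  then show ?thesis by blast
qed

lemma lipschitz_on_fst: "1-lipschitz_on X fst"
  by (rule lipschitz_onI) (simp_all add: dist_fst_le)

lemma lipschitz_on_snd: "1-lipschitz_on X snd"
  by (rule lipschitz_onI) (simp_all add: dist_snd_le)

lemma ex_lipschitz_on_const: "\<exists>L. L-lipschitz_on X (\<lambda>x. c)"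
  using lipschitz_on_constant by blast

lemma ex_lipschitz_on_add:
  fixes f g :: "'a::metric_space \<Rightarrow> 'b::real_normed_vector"
  shows "\<exists>L. L-lipschitz_on X f \<Longrightarrow> \<exists>M. M-lipschitz_on X g \<Longrightarrow> \<exists>K. K-lipschitz_on X (\<lambda>x. f x + g x)"
  by (blast intro: lipschitz_on_add)

lemma ex_lipschitz_on_diff:
  fixes f g :: "'a::metric_space \<Rightarrow> 'b::real_normed_vector"
  shows "\<exists>L. L-lipschitz_on X f \<Longrightarrow> \<exists>M. M-lipschitz_on X g \<Longrightarrow> \<exists>K. K-lipschitz_on X (\<lambda>x. f x - g x)"
  by (blast intro: lipschitz_on_diff)

lemma ex_lipschitz_on_Pair:
  fixes f :: "'a::metric_space \<Rightarrow> 'b::metric_space" and g :: "'a \<Rightarrow> 'c::metric_space"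
  shows "\<exists>L. L-lipschitz_on X f \<Longrightarrow> \<exists>M. M-lipschitz_on X g \<Longrightarrow> \<exists>K. K-lipschitz_on X (\<lambda>x. (f x, g x))"
  by (blast intro: lipschitz_on_Pair)

lemma lipschitz_on_compose_closest_point:
  fixes F :: "'a::euclidean_space \<Rightarrow> 'b::metric_space"
  assumes "L-lipschitz_on (cball 0 r) F" "r \<ge> 0"
  shows "L-lipschitz_on UNIV (\<lambda>p. F (closest_point (cball 0 r) p))"
proof -
  have "1-lipschitz_on UNIV (closest_point (cball (0::'a) r))"
    using assms(2) by (intro lipschitz_onI) (simp_all add: closest_point_lipschitz)
  moreover have "closest_point (cball 0 r) ` UNIV \<subseteq> cball (0::'a) r"
    using assms(2) by (auto intro: closest_point_in_set)
  ultimately have "(L * 1)-lipschitz_on UNIV (\<lambda>p. F (closest_point (cball 0 r) p))"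
    by (intro lipschitz_on_compose2 lipschitz_on_subset[OF assms(1)])
  then show ?thesis
    by simp
qed

section \<open>Solutions of Lipschitz initial value problems\<close>

lemma norm_integral_diff_le_exp:
  fixes k1 k2 :: "real \<Rightarrow> 'a::banach"
  assumes "k1 integrable_on {0..c}" "k2 integrable_on {0..c}" "c \<ge> 0"
    and "\<And>s. s \<in> {0..c} \<Longrightarrow> norm (k1 s - k2 s) \<le> L * exp (2 * L * s) * D"
  shows "norm (integral {0..c} k1 - integral {0..c} k2) \<le> D * (exp (2 * L * c) - 1) / 2"
proof -
  have "((\<lambda>s. L * exp (2 * L * s) * D) has_integral (D * exp (2 * L * c) / 2 - D * exp (2 * L * 0) / 2)) {0..c}"
    using \<open>c \<ge> 0\<close>
    by (intro fundamental_theorem_of_calculus has_real_derivative_iff_has_vector_derivative[THEN iffD1])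
      (auto intro!: derivative_eq_intros)
  then have bound: "((\<lambda>s. L * exp (2 * L * s) * D) has_integral (D * (exp (2 * L * c) - 1) / 2)) {0..c}"
    by (simp add: field_simps)
  have "norm (integral {0..c} (\<lambda>s. k1 s - k2 s)) \<le> integral {0..c} (\<lambda>s. L * exp (2 * L * s) * D)"
    by (rule integral_norm_bound_integral) (use bound assms in \<open>auto intro: integrable_diff\<close>)
  also have "\<dots> = D * (exp (2 * L * c) - 1) / 2"
    by (rule integral_unique[OF bound])
  finally show ?thesis
    by (simp only: integral_diff[OF assms(1,2)])
qed

lemma integral_equation_has_vector_derivative:
  fixes G :: "'a::banach \<Rightarrow> 'a"
  assumes "continuous_on UNIV G" "continuous_on {0..T} f"
    and "\<And>t. t \<in> {0..T} \<Longrightarrow> f t = p0 + integral {0..t} (\<lambda>s. G (f s))" and "t \<in> {0..T}"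
  shows "(f has_vector_derivative G (f t)) (at t within {0..T})"
proof -
  have "continuous_on {0..T} (\<lambda>s. G (f s))"
    using assms(1,2) by (rule continuous_on_compose2) auto
  then have "((\<lambda>t. integral {0..t} (\<lambda>s. G (f s))) has_vector_derivative G (f t)) (at t within {0..T})"
    using assms(4) by (rule integral_has_vector_derivative)
  then have "((\<lambda>t. p0 + integral {0..t} (\<lambda>s. G (f s))) has_vector_derivative 0 + G (f t)) (at t within {0..T})"
    by (intro has_vector_derivative_add has_vector_derivative_const)
  then show ?thesis
    using has_vector_derivative_transform[OF assms(4,3)] by simp
qed

(* h stands for t \<mapsto> exp (-2 K t) f t; for a K-Lipschitz G this weight makes the Picard
   operator a 1/2-contraction in the sup norm (Bielecki). *)
definition weighted_picard :: "('a::banach \<Rightarrow> 'a) \<Rightarrow> real \<Rightarrow> 'a \<Rightarrow> (real \<Rightarrow>\<^sub>C 'a) \<Rightarrow> real \<Rightarrow> 'a" where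
  "weighted_picard G K p0 h t =
     exp (- 2 * K * t) *\<^sub>R (p0 + integral {0..t} (\<lambda>s. G (exp (2 * K * s) *\<^sub>R apply_bcontfun h s)))"

lemma continuous_on_weighted_integrand:
  fixes G :: "'a::real_normed_vector \<Rightarrow> 'b::topological_space"
  assumes "continuous_on UNIV G"
  shows "continuous_on S (\<lambda>s. G (exp (2 * K * s) *\<^sub>R apply_bcontfun h s))"
proof -
  have "continuous_on S (\<lambda>s. exp (2 * K * s) *\<^sub>R apply_bcontfun h s)"
    by (intro continuous_intros continuous_on_apply_bcontfun)
  then show ?thesis
    by (rule continuous_on_compose2[OF assms]) auto
qed

lemma continuous_on_weighted_picard:
  assumes "continuous_on UNIV G"
  shows "continuous_on {0..T} (weighted_picard G K p0 h)"
proof -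
  have "continuous_on {0..T} (\<lambda>t. integral {0..t} (\<lambda>s. G (exp (2 * K * s) *\<^sub>R apply_bcontfun h s)))"
    by (intro indefinite_integral_continuous_1 integrable_continuous_interval
        continuous_on_weighted_integrand[OF assms])
  then show ?thesis
    unfolding weighted_picard_def by (intro continuous_intros)
qed

lemma weighted_picard_contraction:
  assumes lip: "K-lipschitz_on UNIV G" and "t \<ge> 0"
  shows "dist (weighted_picard G K p0 h1 t) (weighted_picard G K p0 h2 t) \<le> 1 / 2 * dist h1 h2"
proof -
  define k where "k h = (\<lambda>s. G (exp (2 * K * s) *\<^sub>R apply_bcontfun h s))" for h
  have int_k: "k h integrable_on {0..t}" for h
    unfolding k_def
    by (intro integrable_continuous_interval continuous_on_weighted_integrand lipschitz_on_continuous_on[OF lip])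
  have "norm (k h1 s - k h2 s) \<le> K * exp (2 * K * s) * dist h1 h2" for s
  proof -
    have "norm (k h1 s - k h2 s) \<le> K * dist (exp (2 * K * s) *\<^sub>R apply_bcontfun h1 s) (exp (2 * K * s) *\<^sub>R apply_bcontfun h2 s)"
      unfolding k_def dist_norm[symmetric] by (rule lipschitz_onD[OF lip]) auto
    also have "\<dots> = K * (exp (2 * K * s) * dist (apply_bcontfun h1 s) (apply_bcontfun h2 s))"
      by (simp add: dist_norm flip: scaleR_diff_right)
    also have "\<dots> \<le> K * (exp (2 * K * s) * dist h1 h2)"
      using lipschitz_on_nonneg[OF lip] by (intro mult_left_mono dist_bounded) auto
    finally show ?thesis
      by (simp add: mult.assoc)
  qed
  then have "norm (integral {0..t} (k h1) - integral {0..t} (k h2)) \<le> dist h1 h2 * (exp (2 * K * t) - 1) / 2"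
    using \<open>t \<ge> 0\<close> by (intro norm_integral_diff_le_exp int_k) auto
  then have "exp (- 2 * K * t) * norm (integral {0..t} (k h1) - integral {0..t} (k h2))
      \<le> exp (- 2 * K * t) * (dist h1 h2 * (exp (2 * K * t) - 1) / 2)"
    by (intro mult_left_mono) auto
  also have "\<dots> = dist h1 h2 * (1 - exp (- 2 * K * t)) / 2"
    by (simp add: field_simps flip: exp_add)
  also have "\<dots> \<le> 1 / 2 * dist h1 h2"
    by (simp add: field_simps)
  finally show ?thesis
    by (simp add: weighted_picard_def k_def dist_norm flip: scaleR_diff_right)
qed

lemma bcontfun_compose_clamp:
  fixes g :: "real \<Rightarrow> 'a::metric_space"
  assumes "continuous_on {0..T} g" and "T \<ge> 0"
  shows "(\<lambda>t. g (max 0 (min T t))) \<in> bcontfun"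
proof -
  have "continuous_on UNIV (\<lambda>t. max 0 (min T t))"
    by (intro continuous_intros)
  then have "continuous_on UNIV (\<lambda>t. g (max 0 (min T t)))"
    by (rule continuous_on_compose2[OF assms(1)]) (use assms(2) in auto)
  moreover have "range (\<lambda>t. g (max 0 (min T t))) \<subseteq> g ` {0..T}"
    using assms(2) by auto
  then have "bounded (range (\<lambda>t. g (max 0 (min T t))))"
    using compact_imp_bounded[OF compact_continuous_image[OF assms(1) compact_Icc]] bounded_subset by blast
  ultimately show ?thesis
    by (simp add: bcontfun_def)
qed

lemma lipschitz_ode_has_solution:
  fixes G :: "'a::banach \<Rightarrow> 'a"
  assumes "L-lipschitz_on UNIV G" and "T \<ge> 0"
  shows "\<exists>f. f 0 = p0 \<and> (\<forall>t\<in>{0..T}. (f has_vector_derivative G (f t)) (at t within {0..T}))"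
proof -
  have contG: "continuous_on UNIV G"
    using assms(1) by (rule lipschitz_on_continuous_on)
  \<comment> \<open>freezing time outside [0, T] lets the operator act on bounded continuous functions on the line\<close>
  define cl where "cl t = max 0 (min T t)" for t
  have cl: "cl t \<in> {0..T}" "t \<in> {0..T} \<Longrightarrow> cl t = t" for t
    using assms(2) by (auto simp: cl_def)
  define P where "P h t = weighted_picard G L p0 h (cl t)" for h t
  have "P h \<in> bcontfun" for h
    unfolding P_def cl_def
    by (rule bcontfun_compose_clamp[OF continuous_on_weighted_picard[OF contG] assms(2)])
  then have P: "apply_bcontfun (Bcontfun (P h)) = P h" for h
    by (simp add: Bcontfun_inverse)
  have "dist (Bcontfun (P h1)) (Bcontfun (P h2)) \<le> 1 / 2 * dist h1 h2" for h1 h2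
  proof (rule dist_bound)
    fix t
    show "dist (apply_bcontfun (Bcontfun (P h1)) t) (apply_bcontfun (Bcontfun (P h2)) t) \<le> 1 / 2 * dist h1 h2"
      using weighted_picard_contraction[OF assms(1), of "cl t"] cl(1)[of t] by (simp add: P P_def)
  qed
  then obtain h where h: "Bcontfun (P h) = h"
    using banach_fix_type[of "1 / 2" "\<lambda>h. Bcontfun (P h)"] by auto
  define f where "f t = exp (2 * L * t) *\<^sub>R apply_bcontfun h t" for t
  have f_eq: "f t = p0 + integral {0..t} (\<lambda>s. G (f s))" if "t \<in> {0..T}" for t
  proof -
    have "apply_bcontfun h t = weighted_picard G L p0 h t"
      using P[of h] h cl(2)[OF that] by (metis P_def)
    then show ?thesis
      by (simp add: f_def weighted_picard_def flip: exp_add)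
  qed
  have "continuous_on {0..T} f"
    unfolding f_def by (intro continuous_intros continuous_on_apply_bcontfun)
  then show ?thesis
    using f_eq[of 0] assms(2) integral_equation_has_vector_derivative[OF contG _ f_eq]
    by auto
qed

section \<open>Lyapunov functions along solutions\<close>

lemma gronwall_exp_le:
  fixes \<phi> \<phi>' :: "real \<Rightarrow> real"
  assumes "T \<ge> 0"
    and "\<And>t. t \<in> {0..T} \<Longrightarrow> (\<phi> has_real_derivative \<phi>' t) (at t within {0..T})"
    and "\<And>t. t \<in> {0<..<T} \<Longrightarrow> \<phi>' t \<le> c * \<phi> t"
  shows "\<phi> T \<le> exp (c * T) * \<phi> 0"
proof -
  have "continuous_on {0..T} \<phi>"
    using assms(2) by (metis DERIV_continuous continuous_on_eq_continuous_within)
  then have cont: "continuous_on {0..T} (\<lambda>t. exp (- c * t) * \<phi> t)"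
    by (intro continuous_intros)
  have "exp (- c * T) * \<phi> T \<le> exp (- c * 0) * \<phi> 0"
  proof (rule DERIV_nonpos_imp_decreasing_open[OF assms(1) _ cont])
    fix t assume t: "0 < t" "t < T"
    then have "(\<phi> has_real_derivative \<phi>' t) (at t)"
      using assms(2)[of t] at_within_Icc_at[of 0 t T] by auto
    then have "((\<lambda>t. exp (- c * t) * \<phi> t) has_real_derivative exp (- c * t) * (\<phi>' t - c * \<phi> t)) (at t)"
      by (auto intro!: derivative_eq_intros simp: algebra_simps)
    moreover have "exp (- c * t) * (\<phi>' t - c * \<phi> t) \<le> 0"
      using assms(3)[of t] t by (simp add: mult_nonneg_nonpos)
    ultimately show "\<exists>y. ((\<lambda>t. exp (- c * t) * \<phi> t) has_real_derivative y) (at t) \<and> y \<le> 0"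
      by blast
  qed
  then show ?thesis
    by (simp add: exp_minus field_simps)
qed

lemma gronwall_exp_ge:
  fixes \<phi> \<phi>' :: "real \<Rightarrow> real"
  assumes "T \<ge> 0"
    and "\<And>t. t \<in> {0..T} \<Longrightarrow> (\<phi> has_real_derivative \<phi>' t) (at t within {0..T})"
    and "\<And>t. t \<in> {0<..<T} \<Longrightarrow> c * \<phi> t \<le> \<phi>' t"
  shows "exp (c * T) * \<phi> 0 \<le> \<phi> T"
  using gronwall_exp_le[of T "\<lambda>t. - \<phi> t" "\<lambda>t. - \<phi>' t" c] assms
  by (auto intro: derivative_eq_intros)

lemma continuous_first_hitting_time:
  fixes h :: "real \<Rightarrow> real"
  assumes "continuous_on {0..T} h" and "h 0 < a" and "t1 \<in> {0..T}" and "a \<le> h t1"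
  obtains t where "t \<in> {0..T}" "h t = a" "\<And>s. 0 \<le> s \<Longrightarrow> s < t \<Longrightarrow> h s < a"
proof -
  define B where "B = {t \<in> {0..T}. a \<le> h t}"
  have "closed B"
    unfolding B_def by (rule continuous_on_closed_Collect_le[OF continuous_on_const assms(1)]) simp
  moreover have "B \<noteq> {}" "bdd_below B"
    using assms(3,4) by (auto simp: B_def intro!: bdd_belowI[of _ 0])
  ultimately have "Inf B \<in> B"
    by (intro closed_contains_Inf)
  then have ts: "Inf B \<in> {0..T}" "a \<le> h (Inf B)"
    by (auto simp: B_def)
  have below: "h s < a" if "0 \<le> s" "s < Inf B" for s
    using that cInf_lower[OF _ \<open>bdd_below B\<close>, of s] ts(1) by (force simp: B_def)
  obtain x where x: "0 \<le> x" "x \<le> Inf B" "h x = a"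
    using IVT'[of h 0 a "Inf B"] assms(2) ts continuous_on_subset[OF assms(1), of "{0..Inf B}"] by force
  then have "x = Inf B"
    using below[of x] by force
  then show ?thesis
    using that x ts below by blast
qed

lemma is_solution_continuous: "is_solution F f T \<Longrightarrow> continuous_on {0..T} f"
  unfolding is_solution_def
  by (metis has_vector_derivative_continuous continuous_on_eq_continuous_within)

lemma is_solution_restrict:
  assumes "is_solution G f T" "T' \<le> T" "\<And>t. t \<in> {0..T'} \<Longrightarrow> G (f t) = F (f t)"
  shows "is_solution F f T'"
  unfolding is_solution_def
proof
  fix t assume t: "t \<in> {0..T'}"
  then have "(f has_vector_derivative G (f t)) (at t within {0..T})"
    using assms(1,2) by (auto simp: is_solution_def)
  then have "(f has_vector_derivative G (f t)) (at t within {0..T'})"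
    by (rule has_vector_derivative_within_subset) (use assms(2) in auto)
  then show "(f has_vector_derivative F (f t)) (at t within {0..T'})"
    using assms(3)[OF t] by simp
qed

lemma is_solution_has_real_derivative:
  assumes "is_solution F f T" "t \<in> {0..T}" "(V has_derivative V') (at (f t))"
  shows "((\<lambda>t. V (f t)) has_real_derivative V' (F (f t))) (at t within {0..T})"
proof -
  have "(f has_vector_derivative F (f t)) (at t within {0..T})"
    using assms(1,2) by (simp add: is_solution_def)
  then have "((V \<circ> f) has_vector_derivative V' (F (f t))) (at t within {0..T})"
    using assms(3) by (rule vector_derivative_diff_chain_within[OF _ has_derivative_at_withinI])
  then show ?thesis
    by (simp add: has_real_derivative_iff_has_vector_derivative o_def)
qed

lemma lyapunov_decay_along_solution:
  assumes sol: "is_solution F f T" and t: "t \<in> {0..T}"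
    and V: "\<And>p. (V has_derivative V' p) (at p)"
    and decay: "\<And>p. norm p < r \<Longrightarrow> V' p (F p) \<le> - c * V p"
    and inside: "\<And>s. s \<in> {0..<t} \<Longrightarrow> norm (f s) < r"
  shows "V (f t) \<le> exp (- c * t) * V (f 0)"
proof (rule gronwall_exp_le[of t "\<lambda>t. V (f t)"])
  have "is_solution F f t"
    using t by (intro is_solution_restrict[OF sol]) auto
  then show "((\<lambda>t. V (f t)) has_real_derivative V' (f s) (F (f s))) (at s within {0..t})" if "s \<in> {0..t}" for s
    by (rule is_solution_has_real_derivative[OF _ that V])
  show "V' (f s) (F (f s)) \<le> - c * V (f s)" if "s \<in> {0<..<t}" for s
    using that by (intro decay inside) auto
qed (use t in auto)

lemma lyapunov_growth_along_solution:
  assumes sol: "is_solution F f T" and t: "t \<in> {0..T}"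
    and V: "\<And>p. (V has_derivative V' p) (at p)"
    and growth: "\<And>p. norm p < r \<Longrightarrow> c * V p \<le> V' p (F p)"
    and inside: "\<And>s. s \<in> {0..<t} \<Longrightarrow> norm (f s) < r"
  shows "exp (c * t) * V (f 0) \<le> V (f t)"
proof (rule gronwall_exp_ge[of t "\<lambda>t. V (f t)"])
  have "is_solution F f t"
    using t by (intro is_solution_restrict[OF sol]) auto
  then show "((\<lambda>t. V (f t)) has_real_derivative V' (f s) (F (f s))) (at s within {0..t})" if "s \<in> {0..t}" for s
    by (rule is_solution_has_real_derivative[OF _ that V])
  show "c * V (f s) \<le> V' (f s) (F (f s))" if "s \<in> {0<..<t}" for s
    using that by (intro growth inside) auto
qed (use t in auto)

lemma lyapunov_stays_in_ball:
  assumes sol: "is_solution F f T"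
    and V: "\<And>p. (V has_derivative V' p) (at p)" and lower: "\<And>p. a * (norm p)\<^sup>2 \<le> V p"
    and decay: "\<And>p. norm p < r \<Longrightarrow> V' p (F p) \<le> - c * V p"
    and "a \<ge> 0" "c \<ge> 0" "norm (f 0) < r" "V (f 0) < a * r\<^sup>2" and t: "t \<in> {0..T}"
  shows "norm (f t) < r"
proof (rule ccontr)
  assume "\<not> norm (f t) < r"
  then obtain s where s: "s \<in> {0..T}" "norm (f s) = r" "\<And>s'. 0 \<le> s' \<Longrightarrow> s' < s \<Longrightarrow> norm (f s') < r"
    using continuous_first_hitting_time[OF continuous_on_norm[OF is_solution_continuous[OF sol]] _ t]
      \<open>norm (f 0) < r\<close> by (metis not_less)
  have "0 \<le> a * (norm (f 0))\<^sup>2"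
    using \<open>a \<ge> 0\<close> by simp
  then have "0 \<le> V (f 0)"
    using lower[of "f 0"] by linarith
  have "a * r\<^sup>2 \<le> V (f s)"
    using lower[of "f s"] s(2) by simp
  also have "\<dots> \<le> exp (- c * s) * V (f 0)"
    using s by (intro lyapunov_decay_along_solution[OF sol _ V decay]) auto
  also have "\<dots> \<le> V (f 0)"
    by (rule mult_left_le_one_le) (use s(1) \<open>c \<ge> 0\<close> \<open>0 \<le> V (f 0)\<close> in auto)
  finally show False
    using \<open>V (f 0) < a * r\<^sup>2\<close> by simp
qed

theorem lyapunov_loc_exp_stable:
  fixes F :: "real \<times> real \<Rightarrow> real \<times> real" and V :: "real \<times> real \<Rightarrow> real"
  assumes F0: "F (0, 0) = (0, 0)"
    and V: "\<And>p. (V has_derivative V' p) (at p)"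
    and lower: "\<And>p. a * (norm p)\<^sup>2 \<le> V p" and upper: "\<And>p. V p \<le> b * (norm p)\<^sup>2"
    and decay: "\<And>p. norm p < r \<Longrightarrow> V' p (F p) \<le> - c * V p"
    and "a > 0" "r > 0" "c > 0"
  shows "loc_exp_stable_origin F"
proof -
  have "a \<le> b"
    using lower[of "(1, 0)"] upper[of "(1, 0)"] by simp
  define \<delta> where "\<delta> = r * sqrt (a / b)"
  define M where "M = sqrt (b / a)"
  have \<delta>: "\<delta> > 0" "\<delta> \<le> r" "b * \<delta>\<^sup>2 = a * r\<^sup>2"
    using \<open>a > 0\<close> \<open>r > 0\<close> \<open>a \<le> b\<close> by (auto simp: \<delta>_def power_mult_distrib)
  have M: "M > 0" "M\<^sup>2 = b / a"
    using \<open>a > 0\<close> \<open>a \<le> b\<close> by (auto simp: M_def)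
  have "norm (f t) \<le> M * exp (- (c / 2) * t) * norm (f 0)"
    if sol: "is_solution F f T" and f0: "norm (f 0) < \<delta>" and t: "t \<in> {0..T}" for f T t
  proof -
    have "V (f 0) \<le> b * (norm (f 0))\<^sup>2"
      by (rule upper)
    also have "\<dots> < a * r\<^sup>2"
      unfolding \<delta>(3)[symmetric] using f0 \<open>a > 0\<close> \<open>a \<le> b\<close>
      by (intro mult_strict_left_mono power_strict_mono) auto
    finally have V0: "V (f 0) < a * r\<^sup>2" .
    have inside: "norm (f s) < r" if "s \<in> {0..T}" for s
      by (rule lyapunov_stays_in_ball[OF sol V lower decay _ _ _ V0 that])
        (use f0 \<delta>(2) \<open>a > 0\<close> \<open>c > 0\<close> in auto)
    have "a * (norm (f t))\<^sup>2 \<le> V (f t)"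
      by (rule lower)
    also have "\<dots> \<le> exp (- c * t) * V (f 0)"
      using t inside by (intro lyapunov_decay_along_solution[OF sol t V decay]) auto
    also have "\<dots> \<le> exp (- c * t) * (b * (norm (f 0))\<^sup>2)"
      using upper by (intro mult_left_mono) auto
    finally have "(norm (f t))\<^sup>2 \<le> b / a * (exp (- c * t) * (norm (f 0))\<^sup>2)"
      using \<open>a > 0\<close> by (simp add: field_simps)
    also have "\<dots> = (M * exp (- (c / 2) * t) * norm (f 0))\<^sup>2"
      by (simp add: M(2) power_mult_distrib power2_eq_square[of "exp _"] flip: exp_add)
    finally show ?thesis
      by (rule power2_le_imp_le) (use M(1) in auto)
  qed
  then show ?thesis
    unfolding loc_exp_stable_origin_def using F0 \<delta>(1) M(1) \<open>c > 0\<close>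
    by (intro conjI exI[of _ \<delta>] exI[of _ M] exI[of _ "c / 2"]) auto
qed

lemma lyapunov_escapes_ball:
  assumes sol: "is_solution F f T" and "T \<ge> 0"
    and V: "\<And>p. (V has_derivative V' p) (at p)" and upper: "\<And>p. V p \<le> b * (norm p)\<^sup>2"
    and growth: "\<And>p. norm p < r \<Longrightarrow> c * V p \<le> V' p (F p)"
    and "b \<ge> 0" "\<epsilon> \<le> r" "b * \<epsilon>\<^sup>2 < exp (c * T) * V (f 0)"
  shows "\<exists>t\<in>{0..T}. \<epsilon> \<le> norm (f t)"
proof (rule ccontr)
  assume "\<not> ?thesis"
  then have small: "norm (f t) < \<epsilon>" if "t \<in> {0..T}" for t
    using that by force
  have "exp (c * T) * V (f 0) \<le> V (f T)"
    using small \<open>T \<ge> 0\<close> \<open>\<epsilon> \<le> r\<close> by (intro lyapunov_growth_along_solution[OF sol _ V growth]) force+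
  also have "\<dots> \<le> b * (norm (f T))\<^sup>2"
    by (rule upper)
  also have "\<dots> \<le> b * \<epsilon>\<^sup>2"
    using small[of T] \<open>T \<ge> 0\<close> \<open>b \<ge> 0\<close> by (intro mult_left_mono power_mono) auto
  finally show False
    using \<open>b * \<epsilon>\<^sup>2 < exp (c * T) * V (f 0)\<close> by simp
qed

lemma lyapunov_solution_reaches_sphere:
  fixes F :: "real \<times> real \<Rightarrow> real \<times> real" and V :: "real \<times> real \<Rightarrow> real"
  assumes lip: "L-lipschitz_on (cball 0 r) F"
    and V: "\<And>p. (V has_derivative V' p) (at p)" and upper: "\<And>p. V p \<le> b * (norm p)\<^sup>2"
    and growth: "\<And>p. norm p < r \<Longrightarrow> c * V p \<le> V' p (F p)"
    and "c > 0" "\<epsilon> < r" "norm p0 < \<epsilon>" "0 < V p0"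
  obtains g T where "T \<ge> 0" "is_solution F g T" "g 0 = p0" "norm (g T) = \<epsilon>"
proof -
  have "0 < b * (norm p0)\<^sup>2"
    using \<open>0 < V p0\<close> upper[of p0] by linarith
  then have "b > 0"
    by (simp add: zero_less_mult_iff)
  define T1 where "T1 = ln ((b * \<epsilon>\<^sup>2 + V p0) / V p0) / c"
  have "1 \<le> (b * \<epsilon>\<^sup>2 + V p0) / V p0"
    using \<open>b > 0\<close> \<open>0 < V p0\<close> by (simp add: field_simps)
  then have T1: "T1 \<ge> 0" "exp (c * T1) * V p0 = b * \<epsilon>\<^sup>2 + V p0"
    using \<open>c > 0\<close> \<open>0 < V p0\<close> by (auto simp: T1_def)
  \<comment> \<open>G is globally Lipschitz, hence has solutions, and agrees with F on the ball\<close>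
  define G where "G p = F (closest_point (cball 0 r) p)" for p
  have G: "G p = F p" if "norm p \<le> r" for p
    using that by (simp add: G_def closest_point_self)
  have "r > 0"
    using \<open>norm p0 < \<epsilon>\<close> \<open>\<epsilon> < r\<close> norm_ge_zero[of p0] by linarith
  obtain g where g0: "g 0 = p0" and sol_G: "is_solution G g T1"
    using lipschitz_ode_has_solution[OF lipschitz_on_compose_closest_point[OF lip] T1(1), of p0] \<open>r > 0\<close>
    by (auto simp: is_solution_def G_def)
  have "\<exists>t\<in>{0..T1}. \<epsilon> \<le> norm (g t)"
    using growth G \<open>b > 0\<close> \<open>\<epsilon> < r\<close> T1 g0 \<open>0 < V p0\<close>
    by (intro lyapunov_escapes_ball[OF sol_G T1(1) V upper, where r = r]) auto
  then obtain T where T: "T \<in> {0..T1}" "norm (g T) = \<epsilon>"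
    and before: "\<And>s. 0 \<le> s \<Longrightarrow> s < T \<Longrightarrow> norm (g s) < \<epsilon>"
    using continuous_first_hitting_time[OF continuous_on_norm[OF is_solution_continuous[OF sol_G]]]
      g0 \<open>norm p0 < \<epsilon>\<close> by metis
  have "norm (g t) \<le> \<epsilon>" if "t \<in> {0..T}" for t
    using that before[of t] T(2) by (cases "t < T") auto
  then have "is_solution F g T"
    using T(1) \<open>\<epsilon> < r\<close> by (intro is_solution_restrict[OF sol_G] G) force+
  then show ?thesis
    using that T g0 by auto
qed

theorem lyapunov_unstable:
  fixes F :: "real \<times> real \<Rightarrow> real \<times> real" and V :: "real \<times> real \<Rightarrow> real"
  assumes F0: "F (0, 0) = (0, 0)" and lip: "L-lipschitz_on (cball 0 r) F"
    and V: "\<And>p. (V has_derivative V' p) (at p)"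
    and upper: "\<And>p. V p \<le> b * (norm p)\<^sup>2"
    and growth: "\<And>p. norm p < r \<Longrightarrow> c * V p \<le> V' p (F p)"
    and positive: "\<And>s. s > 0 \<Longrightarrow> \<exists>p. norm p < s \<and> 0 < V p"
    and "r > 0" "c > 0"
  shows "unstable_origin F"
  unfolding unstable_origin_def lyap_stable_origin_def
proof (intro conjI notI)
  show "F (0, 0) = (0, 0)"
    by (rule F0)
  define \<epsilon> where "\<epsilon> = r / 2"
  have \<epsilon>: "0 < \<epsilon>" "\<epsilon> < r"
    using \<open>r > 0\<close> by (auto simp: \<epsilon>_def)
  assume "\<forall>\<epsilon>>0. \<exists>\<delta>>0. \<forall>f T. 0 \<le> T \<longrightarrow> is_solution F f T \<longrightarrow> norm (f 0) < \<delta> \<longrightarrow> (\<forall>t\<in>{0..T}. norm (f t) < \<epsilon>)"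
  then obtain \<delta> where "\<delta> > 0"
    and stable: "\<And>f T. 0 \<le> T \<Longrightarrow> is_solution F f T \<Longrightarrow> norm (f 0) < \<delta> \<Longrightarrow> \<forall>t\<in>{0..T}. norm (f t) < \<epsilon>"
    using \<epsilon>(1) by meson
  obtain p0 where p0: "norm p0 < min \<delta> \<epsilon>" "0 < V p0"
    using positive[of "min \<delta> \<epsilon>"] \<open>\<delta> > 0\<close> \<epsilon>(1) by auto
  obtain g T where "T \<ge> 0" "is_solution F g T" "g 0 = p0" "norm (g T) = \<epsilon>"
    using lyapunov_solution_reaches_sphere[OF lip V upper growth \<open>c > 0\<close> \<epsilon>(2) _ p0(2)] p0(1)
    by (metis min_less_iff_conj)
  then show False
    using stable[of T g] p0(1) by auto
qed

lemma linearization_error_bilinear: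
  fixes F A :: "'a::real_normed_vector \<Rightarrow> 'a" and W :: "'a \<Rightarrow> 'a \<Rightarrow> real"
  assumes "(F has_derivative A) (at 0)" "F 0 = 0"
    and "\<And>p. linear (W p)" "\<And>p q. \<bar>W p q\<bar> \<le> C * norm p * norm q" and "\<epsilon> > 0"
  obtains r where "r > 0" "\<And>p. norm p < r \<Longrightarrow> \<bar>W p (F p) - W p (A p)\<bar> \<le> \<epsilon> * (norm p)\<^sup>2"
proof -
  define C' where "C' = max C 1"
  have "C * norm p * norm q \<le> C' * norm p * norm q" for p q
    by (intro mult_right_mono) (auto simp: C'_def)
  then have C': "C' > 0" "\<And>p q. \<bar>W p q\<bar> \<le> C' * norm p * norm q"
    using assms(4) by (auto simp: C'_def intro: order_trans[OF assms(4)])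
  obtain r where "r > 0" and r: "\<And>p. norm p < r \<Longrightarrow> norm (F p - A p) \<le> \<epsilon> / C' * norm p"
    using assms(1,2,5) C'(1) unfolding has_derivative_at_alt by (metis diff_zero divide_pos_pos)
  have "\<bar>W p (F p) - W p (A p)\<bar> \<le> \<epsilon> * (norm p)\<^sup>2" if "norm p < r" for p
  proof -
    have "\<bar>W p (F p) - W p (A p)\<bar> = \<bar>W p (F p - A p)\<bar>"
      by (simp add: linear_diff[OF assms(3)])
    also have "\<dots> \<le> C' * norm p * (\<epsilon> / C' * norm p)"
      using C' r[OF that] by (intro order.trans[OF C'(2)] mult_left_mono) auto
    also have "\<dots> = \<epsilon> * (norm p)\<^sup>2"
      using C'(1) by (simp add: power2_eq_square)
    finally show ?thesis .
  qed
  then show ?thesis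
    using \<open>r > 0\<close> that by blast
qed

section \<open>The task-selection field\<close>

lemma abs_fst_le_norm: "\<bar>fst p\<bar> \<le> norm (p :: real \<times> real)"
  by (metis norm_fst_le prod.collapse real_norm_def)

lemma abs_snd_le_norm: "\<bar>snd p\<bar> \<le> norm (p :: real \<times> real)"
  by (metis norm_snd_le prod.collapse real_norm_def)

lemma power2_norm_prod: "(norm (p :: real \<times> real))\<^sup>2 = (fst p)\<^sup>2 + (snd p)\<^sup>2"
  by (cases p) (simp add: norm_Pair)

lemma eta_has_real_derivative:
  "(eta \<sigma> has_real_derivative eta \<sigma> x * (- x / \<sigma>\<^sup>2)) (at x)"
proof (cases "\<sigma> = 0")
  \<comment> \<open>division by zero makes eta 0 constant and the formula 0\<close>
  case True
  then have "eta \<sigma> = (\<lambda>_. 1)" by (simp add: eta_def fun_eq_iff)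
  with True show ?thesis by simp
next
  case False
  then show ?thesis unfolding eta_def
    by (auto intro!: derivative_eq_intros simp: field_simps power2_eq_square)
qed

lemma smooth_fun_has_real_derivative:
  "smooth_fun S \<Longrightarrow> (S has_real_derivative deriv S y) (at y)"
  unfolding smooth_fun_def by (metis DERIV_deriv_iff_real_differentiable funpow_0)

lemma smooth_fun_continuous_deriv:
  "smooth_fun S \<Longrightarrow> continuous_on X (deriv S)"
  unfolding smooth_fun_def
  by (metis continuous_at_imp_continuous_on differentiable_imp_continuous_within funpow_0 funpow_Suc_right o_apply)

lemma has_derivative_fst_compose:
  "(f has_real_derivative D) (at (fst p)) \<Longrightarrow> ((\<lambda>q. f (fst q)) has_derivative (\<lambda>q. fst q * D)) (at p)"
  by (rule DERIV_compose_FDERIV[where g = fst]) (auto intro: derivative_eq_intros)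

lemma task_field_lipschitz_on_compact:
  assumes "smooth_fun S" and "compact X"
  shows "\<exists>L. L-lipschitz_on X (task_field d u b Kz Kx k \<sigma> l \<rho> S)"
proof -
  note C1 = ex_lipschitz_on_compose_C1[OF \<open>compact X\<close> lipschitz_on_fst]
  have "\<exists>L. L-lipschitz_on X (\<lambda>p. S (fst p))"
    using C1 smooth_fun_has_real_derivative[OF assms(1)] smooth_fun_continuous_deriv[OF assms(1)] by blast
  moreover have "\<exists>L. L-lipschitz_on X (\<lambda>p. eta \<sigma> (fst p))"
    by (rule C1[OF eta_has_real_derivative]) (unfold eta_def divide_inverse, intro continuous_intros)
  moreover have "\<exists>L. L-lipschitz_on X (\<lambda>p. tanh (k * fst p))"
    by (rule C1[where h = "\<lambda>z. tanh (k * z)"]) (auto intro!: derivative_eq_intros continuous_intros)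
  moreover have "\<exists>L. L-lipschitz_on X fst" "\<exists>L. L-lipschitz_on X snd"
    using lipschitz_on_fst lipschitz_on_snd by blast+
  moreover note mult = ex_lipschitz_on_mult_compact[OF \<open>compact X\<close>]
  ultimately show ?thesis
    unfolding task_field_def Let_def
    by (intro ex_lipschitz_on_Pair ex_lipschitz_on_add ex_lipschitz_on_diff mult ex_lipschitz_on_const)
qed

(* Jacobian of the field at the origin, with e = u - d. *)
definition task_linearization :: "real \<Rightarrow> real \<Rightarrow> real \<times> real \<Rightarrow> real \<times> real" where
  "task_linearization e Kz q = ((e - Kz) * fst q + Kz * snd q, fst q - snd q)"

(* Polarization of the Lyapunov function V p = (z + Kz x)^2 - e Kz x^2 written with p = (z, x). *)
definition task_lyapunov_form :: "real \<Rightarrow> real \<Rightarrow> real \<times> real \<Rightarrow> real \<times> real \<Rightarrow> real" where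
  "task_lyapunov_form e Kz p q = (fst p + Kz * snd p) * (fst q + Kz * snd q) - e * Kz * snd p * snd q"

lemma task_lyapunov_form_bound:
  assumes "Kz \<ge> 0"
  shows "\<bar>task_lyapunov_form e Kz p q\<bar> \<le> ((1 + Kz)\<^sup>2 + \<bar>e\<bar> * Kz) * norm p * norm q"
proof -
  have lin: "\<bar>fst p + Kz * snd p\<bar> \<le> (1 + Kz) * norm p" for p :: "real \<times> real"
  proof -
    have "\<bar>fst p + Kz * snd p\<bar> \<le> \<bar>fst p\<bar> + Kz * \<bar>snd p\<bar>"
      using abs_triangle_ineq[of "fst p" "Kz * snd p"] assms by (simp add: abs_mult)
    also have "\<dots> \<le> norm p + Kz * norm p"
      using assms abs_fst_le_norm abs_snd_le_norm by (intro add_mono mult_left_mono)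
    finally show ?thesis
      by (simp add: algebra_simps)
  qed
  have "\<bar>task_lyapunov_form e Kz p q\<bar> \<le> \<bar>fst p + Kz * snd p\<bar> * \<bar>fst q + Kz * snd q\<bar> + \<bar>e\<bar> * Kz * (\<bar>snd p\<bar> * \<bar>snd q\<bar>)"
    unfolding task_lyapunov_form_def
    by (rule order.trans[OF abs_triangle_ineq4]) (simp add: abs_mult abs_of_nonneg[OF assms])
  also have "\<dots> \<le> ((1 + Kz) * norm p) * ((1 + Kz) * norm q) + \<bar>e\<bar> * Kz * (norm p * norm q)"
    using assms lin abs_snd_le_norm
    by (intro add_mono mult_mono mult_left_mono) (simp_all add: mult_nonneg_nonneg)
  finally show ?thesis
    by (simp add: algebra_simps power2_eq_square)
qed

lemma task_lyapunov_form_upper_bound: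
  "Kz \<ge> 0 \<Longrightarrow> task_lyapunov_form e Kz p p \<le> ((1 + Kz)\<^sup>2 + \<bar>e\<bar> * Kz) * (norm p)\<^sup>2"
  using task_lyapunov_form_bound[of Kz e p p] by (simp add: power2_eq_square mult.assoc)

lemma linear_task_lyapunov_form: "linear (task_lyapunov_form e Kz p)"
  by (rule linearI) (simp_all add: task_lyapunov_form_def algebra_simps)

lemma task_lyapunov_form_has_derivative:
  "((\<lambda>p. task_lyapunov_form e Kz p p) has_derivative (\<lambda>q. 2 * task_lyapunov_form e Kz p q)) (at p)"
  unfolding task_lyapunov_form_def
  by (rule derivative_eq_intros refl)+ (simp add: fun_eq_iff algebra_simps)

lemma task_lyapunov_form_linearization:
  "task_lyapunov_form e Kz p (task_linearization e Kz p) = e * ((fst p)\<^sup>2 + Kz * (snd p)\<^sup>2)"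
  by (simp add: task_lyapunov_form_def task_linearization_def algebra_simps power2_eq_square)

lemma min_weight_le_weighted_squares:
  "min 1 Kz * (norm p)\<^sup>2 \<le> (fst p)\<^sup>2 + Kz * (snd p)\<^sup>2"
proof -
  have "min 1 Kz * (fst p)\<^sup>2 \<le> 1 * (fst p)\<^sup>2" "min 1 Kz * (snd p)\<^sup>2 \<le> Kz * (snd p)\<^sup>2"
    by (intro mult_right_mono; simp)+
  then show ?thesis
    unfolding power2_norm_prod distrib_left by simp
qed

lemma task_lyapunov_form_lower_bound:
  assumes "e < 0" "Kz > 0"
  obtains a where "a > 0" "\<And>p. a * (norm p)\<^sup>2 \<le> task_lyapunov_form e Kz p p"
proof -
  define q where "q = - e * Kz"
  define D where "D = 2 * Kz\<^sup>2 + 1"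
  define a where "a = min (1 / 2) (q / D)"
  have q: "q > 0" and D: "D > 0"
    using assms by (simp_all add: q_def D_def mult_neg_pos add_pos_nonneg)
  have a: "a > 0" "2 * a \<le> 1" "a * D \<le> q"
    using q D by (auto simp: a_def min_def pos_le_divide_eq)
  have "a * (norm p)\<^sup>2 \<le> task_lyapunov_form e Kz p p" for p
  proof -
    define w where "w = fst p + Kz * snd p"
    have "2 * w\<^sup>2 + 2 * Kz\<^sup>2 * (snd p)\<^sup>2 - (fst p)\<^sup>2 = (fst p + 2 * Kz * snd p)\<^sup>2"
      by (simp add: w_def power2_eq_square algebra_simps)
    then have "(fst p)\<^sup>2 \<le> 2 * w\<^sup>2 + 2 * Kz\<^sup>2 * (snd p)\<^sup>2"
      by (metis diff_ge_0_iff_ge zero_le_power2)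
    then have "(norm p)\<^sup>2 \<le> 2 * w\<^sup>2 + D * (snd p)\<^sup>2"
      by (simp add: D_def power2_norm_prod algebra_simps)
    then have "a * (norm p)\<^sup>2 \<le> a * (2 * w\<^sup>2 + D * (snd p)\<^sup>2)"
      by (rule mult_left_mono) (use a(1) in simp)
    also have "\<dots> = (2 * a) * w\<^sup>2 + (a * D) * (snd p)\<^sup>2"
      by (simp add: algebra_simps)
    also have "\<dots> \<le> 1 * w\<^sup>2 + q * (snd p)\<^sup>2"
      using a by (intro add_mono mult_right_mono) simp_all
    also have "\<dots> = task_lyapunov_form e Kz p p"
      by (simp add: task_lyapunov_form_def w_def q_def power2_eq_square)
    finally show ?thesis .
  qed
  then show ?thesis
    using a(1) that by blast
qed

context
  fixes d u Kz Kx k \<sigma> l \<rho> :: real and S :: "real \<Rightarrow> real"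
begin

lemma task_field_origin: "S 0 = 0 \<Longrightarrow> task_field d u 0 Kz Kx k \<sigma> l \<rho> S (0, 0) = (0, 0)"
  by (simp add: task_field_def)

lemma task_field_has_derivative_origin:
  assumes "(S has_real_derivative 1) (at 0)"
  shows "(task_field d u 0 Kz Kx k \<sigma> l \<rho> S has_derivative task_linearization (u - d) Kz) (at (0, 0))"
proof -
  have eq: "task_field d u 0 Kz Kx k \<sigma> l \<rho> S = (\<lambda>p.
     (- d * fst p + u * S (fst p) - Kz * eta \<sigma> (fst p) * (fst p - snd p),
      (1 - eta \<sigma> (fst p)) * Kx * (\<rho> / l * tanh (k * fst p) - snd p) - eta \<sigma> (fst p) * (snd p - fst p)))"
    by (simp add: fun_eq_iff task_field_def)
  have tanh: "((\<lambda>z. tanh (k * z)) has_real_derivative k) (at 0)"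
    by (auto intro!: derivative_eq_intros)
  note compose = has_derivative_fst_compose[where p = "(0, 0)", simplified]
  show ?thesis unfolding eq
    by (rule derivative_eq_intros compose[OF assms] compose[OF eta_has_real_derivative[of \<sigma> 0]]
        compose[OF tanh] refl)+
      (simp add: fun_eq_iff eta_def task_linearization_def algebra_simps)
qed

lemma task_field_lyapunov_rate:
  assumes "(S has_real_derivative 1) (at 0)" "S 0 = 0" "Kz > 0" "\<epsilon> > 0"
  obtains r where "r > 0" and "\<And>p. norm p < r \<Longrightarrow>
    \<bar>task_lyapunov_form (u - d) Kz p (task_field d u 0 Kz Kx k \<sigma> l \<rho> S p) - (u - d) * ((fst p)\<^sup>2 + Kz * (snd p)\<^sup>2)\<bar>
      \<le> \<epsilon> * (norm p)\<^sup>2"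
proof -
  let ?F = "task_field d u 0 Kz Kx k \<sigma> l \<rho> S"
  have deriv: "(?F has_derivative task_linearization (u - d) Kz) (at 0)" and F0: "?F 0 = 0"
    using task_field_has_derivative_origin[OF assms(1)] task_field_origin[OF assms(2)]
    by (simp_all add: zero_prod_def)
  show ?thesis
    using linearization_error_bilinear[OF deriv F0 linear_task_lyapunov_form
        task_lyapunov_form_bound[OF less_imp_le[OF assms(3)], of "u - d"] assms(4)] that
    unfolding task_lyapunov_form_linearization by blast
qed

lemma task_field_loc_exp_stable:
  assumes "(S has_real_derivative 1) (at 0)" "S 0 = 0" "Kz > 0" "u < d"
  shows "loc_exp_stable_origin (task_field d u 0 Kz Kx k \<sigma> l \<rho> S)"
proof -
  let ?F = "task_field d u 0 Kz Kx k \<sigma> l \<rho> S"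
  define e where "e = u - d"
  define m where "m = min 1 Kz"
  define C where "C = (1 + Kz)\<^sup>2 + \<bar>e\<bar> * Kz"
  have e: "e < 0" and m: "m > 0" and C: "C > 0"
    using assms(3,4) by (auto simp: e_def m_def C_def add_pos_nonneg)
  have c: "- e * m / C > 0"
    using e m C by (simp add: divide_neg_pos mult_neg_pos)
  obtain r where "r > 0" and rate: "\<And>p. norm p < r \<Longrightarrow>
      2 * \<bar>task_lyapunov_form e Kz p (?F p) - e * ((fst p)\<^sup>2 + Kz * (snd p)\<^sup>2)\<bar> \<le> - e * m * (norm p)\<^sup>2"
    using task_field_lyapunov_rate[OF assms(1-3), of "- e * m / 2"] e m
    unfolding e_def by (auto simp: mult_neg_pos mult.commute)
  obtain a where "a > 0" and lower: "\<And>p. a * (norm p)\<^sup>2 \<le> task_lyapunov_form e Kz p p"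
    using task_lyapunov_form_lower_bound[OF e assms(3)] by blast
  have decay: "2 * task_lyapunov_form e Kz p (?F p) \<le> - (- e * m / C) * task_lyapunov_form e Kz p p" if "norm p < r" for p
  proof -
    have "2 * task_lyapunov_form e Kz p (?F p) \<le> 2 * (e * ((fst p)\<^sup>2 + Kz * (snd p)\<^sup>2)) - e * m * (norm p)\<^sup>2"
      using rate[OF that] abs_ge_self[of "task_lyapunov_form e Kz p (?F p) - e * ((fst p)\<^sup>2 + Kz * (snd p)\<^sup>2)"]
      by simp
    also have "\<dots> \<le> 2 * (e * (m * (norm p)\<^sup>2)) - e * m * (norm p)\<^sup>2"
      using e min_weight_le_weighted_squares[of Kz p] by (simp add: m_def)
    also have "\<dots> = e * m / C * (C * (norm p)\<^sup>2)"
      using C by (simp add: algebra_simps)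
    also have "\<dots> \<le> e * m / C * task_lyapunov_form e Kz p p"
      using task_lyapunov_form_upper_bound[of Kz e p] assms(3) e m C
      by (intro mult_left_mono_neg) (auto simp: C_def divide_nonpos_pos mult_nonpos_nonneg)
    finally show ?thesis
      by simp
  qed
  show ?thesis
    by (rule lyapunov_loc_exp_stable[OF task_field_origin[OF assms(2)] task_lyapunov_form_has_derivative
          lower task_lyapunov_form_upper_bound decay \<open>a > 0\<close> \<open>r > 0\<close> c])
      (use assms(3) in auto)
qed

lemma task_field_unstable:
  assumes "smooth_fun S" "(S has_real_derivative 1) (at 0)" "S 0 = 0" "Kz > 0" "d < u"
  shows "unstable_origin (task_field d u 0 Kz Kx k \<sigma> l \<rho> S)"
proof -
  let ?F = "task_field d u 0 Kz Kx k \<sigma> l \<rho> S"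
  define e where "e = u - d"
  define m where "m = min 1 Kz"
  define C where "C = (1 + Kz)\<^sup>2 + \<bar>e\<bar> * Kz"
  have e: "e > 0" and m: "m > 0" and C: "C > 0"
    using assms(4,5) by (auto simp: e_def m_def C_def add_pos_nonneg)
  have c: "e * m / C > 0"
    using e m C by simp
  obtain r where "r > 0" and rate: "\<And>p. norm p < r \<Longrightarrow>
      2 * \<bar>task_lyapunov_form e Kz p (?F p) - e * ((fst p)\<^sup>2 + Kz * (snd p)\<^sup>2)\<bar> \<le> e * m * (norm p)\<^sup>2"
    using task_field_lyapunov_rate[OF assms(2-4), of "e * m / 2"] e m
    unfolding e_def by (auto simp: mult.commute)
  obtain L where "L-lipschitz_on (cball 0 1) ?F"
    using task_field_lipschitz_on_compact[OF assms(1) compact_cball] by blast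
  then have lip: "L-lipschitz_on (cball 0 (min r 1)) ?F"
    by (rule lipschitz_on_subset) auto
  have growth: "e * m / C * task_lyapunov_form e Kz p p \<le> 2 * task_lyapunov_form e Kz p (?F p)"
    if "norm p < min r 1" for p
  proof -
    have "e * m / C * task_lyapunov_form e Kz p p \<le> e * m / C * (C * (norm p)\<^sup>2)"
      using task_lyapunov_form_upper_bound[of Kz e p] assms(4) c
      by (intro mult_left_mono) (auto simp: C_def)
    also have "\<dots> = 2 * (e * (m * (norm p)\<^sup>2)) - e * m * (norm p)\<^sup>2"
      using C by (simp add: algebra_simps)
    also have "\<dots> \<le> 2 * (e * ((fst p)\<^sup>2 + Kz * (snd p)\<^sup>2)) - e * m * (norm p)\<^sup>2"
      using e min_weight_le_weighted_squares[of Kz p] by (simp add: m_def)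
    also have "\<dots> \<le> 2 * task_lyapunov_form e Kz p (?F p)"
      using rate[of p] that abs_ge_minus_self[of "task_lyapunov_form e Kz p (?F p) - e * ((fst p)\<^sup>2 + Kz * (snd p)\<^sup>2)"]
      by simp
    finally show ?thesis .
  qed
  have positive: "\<exists>p. norm p < s \<and> 0 < task_lyapunov_form e Kz p p" if "s > 0" for s
    using that by (intro exI[of _ "(s / 2, 0)"]) (simp add: task_lyapunov_form_def)
  show ?thesis
    by (rule lyapunov_unstable[OF task_field_origin[OF assms(3)] lip task_lyapunov_form_has_derivative
          task_lyapunov_form_upper_bound growth positive _ c])
      (use assms(4) \<open>r > 0\<close> in auto)
qed

end

theorem lemma1:
  fixes d u Kz Kx k \<sigma> l \<rho> :: real and S :: "real \<Rightarrow> real"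
  assumes "d > 0" "u > 0" "Kz > 0" "Kx > 0" "k > 0" "\<sigma> > 0" "l > 0" "\<rho> \<ge> 0"
    and "smooth_fun S" "odd_fun S" "saturating S" "S 0 = 0" "deriv S 0 = 1"
  shows "(u < d \<longrightarrow> loc_exp_stable_origin (task_field d u 0 Kz Kx k \<sigma> l \<rho> S))
       \<and> (u > d \<longrightarrow> unstable_origin (task_field d u 0 Kz Kx k \<sigma> l \<rho> S))"
proof -
  have S': "(S has_real_derivative 1) (at 0)"
    using smooth_fun_has_real_derivative[OF \<open>smooth_fun S\<close>, of 0] \<open>deriv S 0 = 1\<close> by simp
  show ?thesis
    using task_field_loc_exp_stable[OF S' \<open>S 0 = 0\<close> \<open>Kz > 0\<close>]
      task_field_unstable[OF \<open>smooth_fun S\<close> S' \<open>S 0 = 0\<close> \<open>Kz > 0\<close>]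
    by blast
qed

end
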